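(* Let $1\le k\le 6$, let $\theta\in(\pi/2,\pi)$ be sufficiently close to $\pi/2$ and $\kappa>0$. For each integer $l\in\{0,1,\dots,2k\}$ there is a constant $c>0$, independent of $\tau>0$ and of $z$, such that for all $\tau>0$ and all $z\in\Gamma^\tau_{\theta,\kappa}$: $$\left|\frac{\gamma_l(e^{-z\tau})}{l!}\tau^{l+1}-\frac{1}{z^{l+1}}\right|\le\begin{cases} c\,\tau^{l+1}, & l=0 \text{ or } l\in\{1,3,\dots,2k-1\},\\ c\,\tau^{l+2}|z|, & l\in\{2,4,\dots,2k\}.\end{cases}$$
   Context: For real $p\ge 0$ let $\gamma_p(\xi)=\sum_{n=1}^\infty n^p\xi^n$ for $|\xi|<1$ (extended analytically, e.g. $\gamma_l(\xi)$ is a rational function of $\xi$ with only pole at $\xi=1$ for integer $l$). For $\theta\in(\pi/2,\pi)$ and $\kappa>0$, $\Gamma_{\theta,\kappa}=\{z\in\mathbb C:|z|=\kappa,|\arg z|\le\theta\}\cup\{z=re^{\pm i\theta}:r\ge\kappa\}$, and for $\tau>0$, $\Gamma^\tau_{\theta,\kappa}=\{z\in\Gamma_{\theta,\kappa}:|\operatorname{Im}z|\le\pi/\tau\}$. *)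

theory Defs
  imports "HOL-Analysis.Analysis"
begin

text \<open>gamma_l for integer l >= 0, as the rational function
  gamma_0(xi) = xi/(1-xi), gamma_(l+1)(xi) = xi * gamma_l'(xi);
  for |xi|<1 this equals sum_{n>=1} n^l xi^n, and it is the analytic
  continuation to C - {1}.\<close>
fun gamma_int :: "nat \<Rightarrow> complex \<Rightarrow> complex" where
  "gamma_int 0 = (\<lambda>\<xi>. \<xi> / (1 - \<xi>))"
| "gamma_int (Suc l) = (\<lambda>\<xi>. \<xi> * deriv (gamma_int l) \<xi>)"

definition Gamma_contour :: "real \<Rightarrow> real \<Rightarrow> complex set" where
  "Gamma_contour \<theta> \<kappa> =
     {z. cmod z = \<kappa> \<and> \<bar>Arg z\<bar> \<le> \<theta>}
     \<union> {z. \<exists>r\<ge>\<kappa>. z = complex_of_real r * cis \<theta> \<or> z = complex_of_real r * cis (-\<theta>)}"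

definition Gamma_contour_tau :: "real \<Rightarrow> real \<Rightarrow> real \<Rightarrow> complex set" where
  "Gamma_contour_tau \<theta> \<kappa> \<tau> = {z \<in> Gamma_contour \<theta> \<kappa>. \<bar>Im z\<bar> \<le> pi / \<tau>}"

end

theory Submission
  imports Defs "HOL-Complex_Analysis.Complex_Analysis"
begin

(*
  With xi = e^(-w) one has gamma_0(xi) = 1/(e^w - 1), and xi d/dxi becomes -d/dw, so
  gamma_l(e^(-w)) = (-1)^l (d/dw)^l 1/(e^w - 1). Removing the principal part 1/w of the pole
  at w = 0 leaves G(w) = 1/(e^w - 1) - 1/w, which is holomorphic on the strip |Im w| <= pi;
  with w = z tau the error in the estimate is exactly tau^(l+1) |G^(l)(z tau)| / l!.
  Each G^(l) is bounded on the strip: by compactness where |Re w| <= 2, and by Cauchy's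
  estimates elsewhere, since |G| < 3 for |Re w| > 1. Moreover G(-w) = -1 - G(w), so the even
  derivatives of G vanish at 0, and the mean value inequality with the bound on G^(l+1) gives
  |G^(l)(w)| <= C |w| for even l >= 2.
*)

lemma exp_eq_1_near_real_axis:
  assumes "exp w = 1" and "\<bar>Im w\<bar> < 2 * pi"
  shows "w = 0"
proof -
  obtain n :: int where "Re w = 0" and n: "Im w = of_int (2 * n) * pi"
    using assms(1) by (auto simp: exp_eq_1)
  moreover have "\<bar>real_of_int n\<bar> * (2 * pi) < 1 * (2 * pi)"
    using assms(2) n by (simp add: abs_mult)
  then have "n = 0"
    by (subst (asm) mult_less_cancel_right) auto
  ultimately show ?thesis by (simp add: complex_eq_iff)
qed

lemma open_exp_neq_1: "open {w::complex. exp w \<noteq> 1}"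
  by (rule open_Collect_neq) (auto intro: continuous_intros)

lemma higher_deriv_inverse:
  fixes w :: complex
  assumes "w \<noteq> 0"
  shows "(deriv ^^ n) (\<lambda>w. 1 / w) w = (-1) ^ n * fact n / w ^ (n + 1)"
  using assms
proof (induction n arbitrary: w)
  case (Suc n)
  have "((\<lambda>w. (-1) ^ n * fact n / w ^ (n + 1)) has_field_derivative
          (-1) ^ Suc n * fact (Suc n) / w ^ (Suc n + 1)) (at w)"
    using Suc.prems
    by (auto intro!: derivative_eq_intros simp: divide_simps) (cases n; simp add: algebra_simps)
  then have "((deriv ^^ n) (\<lambda>w. 1 / w) has_field_derivative
               (-1) ^ Suc n * fact (Suc n) / w ^ (Suc n + 1)) (at w)"
    by (rule has_field_derivative_transform_within_open[where S = "-{0}"]) (use Suc in auto)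
  then show ?case
    by (simp add: DERIV_imp_deriv del: fact_Suc power_Suc)
qed simp

lemma higher_deriv_zero_if_point_symmetric:
  fixes f :: "complex \<Rightarrow> complex"
  assumes holo: "f holomorphic_on S" and "open S" "0 \<in> S"
    and symm: "\<And>w. w \<in> S \<Longrightarrow> -w \<in> S \<and> f (-w) + f w = c"
    and "even n" "n \<noteq> 0"
  shows "(deriv ^^ n) f 0 = 0"
proof -
  have "(deriv ^^ n) (\<lambda>w. f (-1 * w)) 0 = (-1) ^ n * (deriv ^^ n) f (-1 * 0)"
    using symm by (intro higher_deriv_compose_linear[OF holo \<open>open S\<close> \<open>open S\<close> \<open>0 \<in> S\<close>]) auto
  then have reflected: "(deriv ^^ n) (\<lambda>w. f (-1 * w)) 0 = (deriv ^^ n) f 0"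
    using \<open>even n\<close> by simp
  have "\<forall>\<^sub>F w in nhds 0. f (-1 * w) = c - f w"
    using eventually_nhds_in_open[OF \<open>open S\<close> \<open>0 \<in> S\<close>]
    by eventually_elim (simp add: symm eq_diff_eq)
  then have "(deriv ^^ n) (\<lambda>w. f (-1 * w)) 0 = (deriv ^^ n) (\<lambda>w. c - f w) 0"
    by (rule higher_deriv_cong_ev) simp
  also have "\<dots> = - (deriv ^^ n) f 0"
    using higher_deriv_diff[OF _ holo \<open>open S\<close> \<open>0 \<in> S\<close>, of "\<lambda>w. c"] \<open>n \<noteq> 0\<close> by simp
  finally show ?thesis
    using reflected by simp
qed

section \<open>The functions gamma_l in the variable w = -ln xi\<close>

lemma holomorphic_gamma_int: "gamma_int l holomorphic_on -{1}"
proof (induction l)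
  case 0
  have "(\<lambda>\<xi>. \<xi> / (1 - \<xi>)) holomorphic_on -{1}"
    by (intro holomorphic_intros) auto
  then show ?case by simp
next
  case (Suc l)
  then have "(\<lambda>\<xi>. \<xi> * deriv (gamma_int l) \<xi>) holomorphic_on -{1}"
    by (intro holomorphic_intros holomorphic_deriv) auto
  then show ?case by simp
qed

lemma has_field_derivative_gamma_int_exp_minus:
  assumes "exp w \<noteq> 1"
  shows "((\<lambda>w. gamma_int l (exp (-w))) has_field_derivative
           - gamma_int (Suc l) (exp (-w))) (at w)"
proof -
  have "exp (-w) \<in> -{1}"
    using assms by (simp add: exp_minus)
  then have "(gamma_int l has_field_derivative deriv (gamma_int l) (exp (-w))) (at (exp (-w)))"
    by (intro holomorphic_derivI[OF holomorphic_gamma_int]) auto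
  then have "((\<lambda>w. gamma_int l (exp (-w))) has_field_derivative
               deriv (gamma_int l) (exp (-w)) * - exp (-w)) (at w)"
    by (rule DERIV_chain2[where g = "\<lambda>w. exp (-w)"]) (auto intro!: derivative_eq_intros)
  then show ?thesis
    by (simp add: mult.commute)
qed

lemma higher_deriv_inv_expm1:
  assumes "exp w \<noteq> 1"
  shows "(deriv ^^ l) (\<lambda>w. 1 / (exp w - 1)) w = (-1) ^ l * gamma_int l (exp (-w))"
  using assms
proof (induction l arbitrary: w)
  case 0
  have "exp w \<noteq> 0" by simp
  with 0 show ?case
    by (simp add: exp_minus field_simps)
next
  case (Suc l)
  have "\<forall>\<^sub>F v in nhds w. exp v \<noteq> 1"
    using eventually_nhds_in_open[OF open_exp_neq_1] Suc.prems by simp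
  then have "\<forall>\<^sub>F v in nhds w. (deriv ^^ l) (\<lambda>w. 1 / (exp w - 1)) v = (-1) ^ l * gamma_int l (exp (-v))"
    by eventually_elim (rule Suc.IH)
  then have "(deriv ^^ Suc l) (\<lambda>w. 1 / (exp w - 1)) w
               = deriv (\<lambda>v. (-1) ^ l * gamma_int l (exp (-v))) w"
    by (simp add: deriv_cong_ev)
  also have "\<dots> = (-1) ^ Suc l * gamma_int (Suc l) (exp (-w))"
    by (rule DERIV_imp_deriv)
       (use DERIV_cmult[OF has_field_derivative_gamma_int_exp_minus[OF Suc.prems]] in simp)
  finally show ?case .
qed

section \<open>The regular part of 1/(e^w - 1) at the origin\<close>

(* Its values at the other poles 2 pi i n, n \<noteq> 0, are junk. *)
definition inv_expm1_reg :: "complex \<Rightarrow> complex" where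
  "inv_expm1_reg w = (if w = 0 then -1/2 else 1 / (exp w - 1) - 1 / w)"

lemma open_inv_expm1_reg_domain: "open {w::complex. w = 0 \<or> exp w \<noteq> 1}"
proof -
  have "w = 0 \<or> exp w \<noteq> 1" if "w \<in> ball 0 (2 * pi)" for w :: complex
  proof -
    have "\<bar>Im w\<bar> < 2 * pi"
      using that abs_Im_le_cmod[of w] by simp
    then show ?thesis
      using exp_eq_1_near_real_axis by blast
  qed
  then have "{w::complex. w = 0 \<or> exp w \<noteq> 1} = {w. exp w \<noteq> 1} \<union> ball 0 (2 * pi)"
    by (auto simp del: mem_ball_0) (metis mem_ball_0)
  then show ?thesis
    using open_exp_neq_1 by auto
qed

lemma strip_subset_inv_expm1_reg_domain:
  "{w. \<bar>Im w\<bar> \<le> pi} \<subseteq> {w. w = 0 \<or> exp w \<noteq> 1}"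
proof
  fix w assume "w \<in> {w. \<bar>Im w\<bar> \<le> pi}"
  then have "\<bar>Im w\<bar> \<le> pi"
    by simp
  then have "\<bar>Im w\<bar> < 2 * pi"
    using pi_gt_zero by linarith
  then show "w \<in> {w. w = 0 \<or> exp w \<noteq> 1}"
    using exp_eq_1_near_real_axis by blast
qed

lemma tendsto_inv_expm1_minus_inverse_0:
  "((\<lambda>w::complex. 1 / (exp w - 1) - 1 / w) \<longlongrightarrow> -1/2) (at 0)"
proof -
  define A where "A w = (exp w - 1 - w) / w\<^sup>2" for w :: complex
  have "(\<lambda>n. 1 / fact (n + 2) * w ^ n) sums A w" if "w \<noteq> 0" for w
  proof -
    have "(\<lambda>n. w ^ (n + 2) /\<^sub>R fact (n + 2)) sums (exp w - 1 - w)"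
      using exp_converges[of w] by (subst sums_iff_shift) (simp add: eval_nat_numeral)
    then have "(\<lambda>n. w ^ (n + 2) /\<^sub>R fact (n + 2) / w\<^sup>2) sums A w"
      unfolding A_def by (rule sums_divide)
    moreover have "w ^ (n + 2) /\<^sub>R fact (n + 2) / w\<^sup>2 = 1 / fact (n + 2) * w ^ n" for n
      using that by (simp add: scaleR_conv_of_real power_add power2_eq_square divide_simps del: fact_Suc)
    ultimately show ?thesis
      by simp
  qed
  then have A: "(A \<longlongrightarrow> 1/2) (at 0)"
    using powser_limit_0_strong[of 1 "\<lambda>n. 1 / fact (n + 2)" A] by simp
  then have B: "((\<lambda>w. 1 + w * A w) \<longlongrightarrow> 1) (at 0)"
    by (auto intro!: tendsto_eq_intros)
  have "((\<lambda>w. - A w / (1 + w * A w)) \<longlongrightarrow> -1/2) (at 0)"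
    using tendsto_divide[OF tendsto_minus[OF A] B] by simp
  moreover have "\<forall>\<^sub>F w in at 0. 1 + w * A w \<noteq> 0"
    using B by (rule tendsto_imp_eventually_ne) simp
  then have "\<forall>\<^sub>F w in at 0. - A w / (1 + w * A w) = 1 / (exp w - 1) - 1 / w"
    unfolding eventually_at_filter
    by eventually_elim (auto simp: A_def field_simps power2_eq_square)
  ultimately show ?thesis
    by (rule Lim_transform_eventually)
qed

lemma holomorphic_inv_expm1_reg: "inv_expm1_reg holomorphic_on {w. w = 0 \<or> exp w \<noteq> 1}"
proof (rule no_isolated_singularity'[where K = "{0}"])
  have "(inv_expm1_reg \<longlongrightarrow> -1/2) (at 0)"
    by (rule Lim_transform_eventually[OF tendsto_inv_expm1_minus_inverse_0])
       (simp add: eventually_at_filter inv_expm1_reg_def)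
  then show "(inv_expm1_reg \<longlongrightarrow> inv_expm1_reg z) (at z within {w. w = 0 \<or> exp w \<noteq> 1})"
    if "z \<in> {0}" for z
    using that by (simp add: inv_expm1_reg_def at_within_open[OF _ open_inv_expm1_reg_domain])
  have "(\<lambda>w. 1 / (exp w - 1) - 1 / w) holomorphic_on {w. w = 0 \<or> exp w \<noteq> 1} - {0}"
    by (intro holomorphic_intros) auto
  then show "inv_expm1_reg holomorphic_on {w. w = 0 \<or> exp w \<noteq> 1} - {0}"
    by (rule holomorphic_transform) (auto simp: inv_expm1_reg_def)
qed (use open_inv_expm1_reg_domain in auto)

lemma inv_expm1_reg_minus:
  assumes "w = 0 \<or> exp w \<noteq> 1"
  shows "inv_expm1_reg (-w) + inv_expm1_reg w = -1"
proof (cases "w = 0")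
  case False
  with assms have "exp w - 1 \<noteq> 0"
    by simp
  then have "1 / (exp (-w) - 1) = -1 - 1 / (exp w - 1)"
    by (simp add: exp_minus field_simps)
  with False show ?thesis
    by (simp add: inv_expm1_reg_def)
qed (simp add: inv_expm1_reg_def)

lemma gamma_int_exp_minus_sub_inverse_power:
  assumes "exp w \<noteq> 1"
  shows "gamma_int l (exp (-w)) / fact l - 1 / w ^ (l + 1)
           = (-1) ^ l * (deriv ^^ l) inv_expm1_reg w / fact l"
proof -
  define T where "T = {v::complex. exp v \<noteq> 1}"
  have "open T"
    unfolding T_def by (rule open_exp_neq_1)
  have "w \<in> T" "w \<noteq> 0"
    using assms by (auto simp: T_def)
  have holo_reg: "inv_expm1_reg holomorphic_on T"
    by (rule holomorphic_on_subset[OF holomorphic_inv_expm1_reg]) (auto simp: T_def)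
  have holo_inverse: "(\<lambda>v. 1 / v) holomorphic_on T"
    by (intro holomorphic_intros) (auto simp: T_def)
  have "(-1) ^ l * gamma_int l (exp (-w)) = (deriv ^^ l) (\<lambda>v. 1 / (exp v - 1)) w"
    using higher_deriv_inv_expm1[OF assms] by simp
  also have "\<dots> = (deriv ^^ l) (\<lambda>v. inv_expm1_reg v + 1 / v) w"
    by (rule higher_deriv_transform_within_open[OF _ holomorphic_on_add[OF holo_reg holo_inverse]
          \<open>open T\<close> \<open>w \<in> T\<close>])
       (auto intro!: holomorphic_intros simp: T_def inv_expm1_reg_def)
  also have "\<dots> = (deriv ^^ l) inv_expm1_reg w + (-1) ^ l * fact l / w ^ (l + 1)"
    using higher_deriv_add[OF holo_reg holo_inverse \<open>open T\<close> \<open>w \<in> T\<close>]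
          higher_deriv_inverse[OF \<open>w \<noteq> 0\<close>] by simp
  finally have eq: "(-1) ^ l * gamma_int l (exp (-w))
                      = (deriv ^^ l) inv_expm1_reg w + (-1) ^ l * fact l / w ^ (l + 1)" .
  have "gamma_int l (exp (-w)) = (-1) ^ l * ((-1) ^ l * gamma_int l (exp (-w)))"
    by (metis minus_one_mult_self mult.assoc mult_1)
  also have "\<dots> = (-1) ^ l * (deriv ^^ l) inv_expm1_reg w + fact l / w ^ (l + 1)"
    unfolding eq by (simp add: distrib_left flip: mult.assoc)
  finally show ?thesis
    by (simp add: add_divide_distrib)
qed

section \<open>Estimates on the strip |Im w| \<le> pi\<close>

lemma norm_inv_expm1_reg_less:
  assumes "1 < \<bar>Re u\<bar>"
  shows "cmod (inv_expm1_reg u) < 3"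
proof -
  have "1 / 2 < \<bar>exp (Re u) - 1\<bar>"
  proof (cases "1 < Re u")
    case True
    then show ?thesis
      using exp_ge_add_one_self[of "Re u"] by linarith
  next
    case False
    then have "exp (Re u) < exp (-1)"
      using assms by simp
    also have "exp (-1) \<le> (1 / 2 :: real)"
      using exp_ge_add_one_self[of 1] by (simp add: exp_minus field_simps)
    finally show ?thesis
      by arith
  qed
  also have "\<bar>exp (Re u) - 1\<bar> \<le> cmod (exp u - 1)"
    using norm_triangle_ineq3[of "exp u" 1] by (simp add: norm_exp_eq_Re)
  finally have "cmod (1 / (exp u - 1)) < 2"
    by (simp add: norm_divide divide_simps)
  moreover have "cmod (1 / u) < 1"
    using assms abs_Re_le_cmod[of u] by (simp add: norm_divide divide_simps)
  moreover have "u \<noteq> 0"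
    using assms by auto
  ultimately show ?thesis
    using norm_triangle_ineq4[of "1 / (exp u - 1)" "1 / u"] by (simp add: inv_expm1_reg_def)
qed

lemma norm_higher_deriv_inv_expm1_reg_far:
  assumes "2 \<le> \<bar>Re w\<bar>"
  shows "cmod ((deriv ^^ n) inv_expm1_reg w) \<le> 3 * fact n"
proof (cases "n = 0")
  case True
  then show ?thesis
    using norm_inv_expm1_reg_less[of w] assms by simp
next
  case False
  have Re_dist: "\<bar>Re w\<bar> - \<bar>Re u\<bar> \<le> dist w u" for u
    using abs_Re_le_cmod[of "w - u"] abs_triangle_ineq2[of "Re w" "Re u"] by (simp add: dist_norm)
  have cball_sub: "cball w 1 \<subseteq> {u. u = 0 \<or> exp u \<noteq> 1}"
  proof
    fix u assume "u \<in> cball w 1"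
    then have "Re u \<noteq> 0"
      using Re_dist[of u] assms by auto
    then show "u \<in> {u. u = 0 \<or> exp u \<noteq> 1}"
      by (simp add: exp_eq_1)
  qed
  have "cmod ((deriv ^^ n) inv_expm1_reg w) \<le> fact n * 3 / 1 ^ n"
  proof (rule Cauchy_higher_deriv_bound[where y = 0])
    show "inv_expm1_reg holomorphic_on ball w 1"
      using cball_sub ball_subset_cball by (blast intro: holomorphic_on_subset[OF holomorphic_inv_expm1_reg])
    show "continuous_on (cball w 1) inv_expm1_reg"
      using cball_sub
      by (intro holomorphic_on_imp_continuous_on holomorphic_on_subset[OF holomorphic_inv_expm1_reg])
    show "inv_expm1_reg u \<in> ball 0 3" if "u \<in> ball w 1" for u
      using norm_inv_expm1_reg_less Re_dist[of u] assms that by simp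
  qed (use False in auto)
  then show ?thesis
    by simp
qed

lemma bounded_higher_deriv_inv_expm1_reg_strip:
  "\<exists>C>0. \<forall>w. \<bar>Im w\<bar> \<le> pi \<longrightarrow> cmod ((deriv ^^ n) inv_expm1_reg w) \<le> C"
proof -
  define K where "K = cbox (Complex (-2) (-pi)) (Complex 2 pi)"
  have K_iff: "w \<in> K \<longleftrightarrow> \<bar>Re w\<bar> \<le> 2 \<and> \<bar>Im w\<bar> \<le> pi" for w
    by (auto simp: K_def cbox_complex_eq)
  have "K \<subseteq> {w. w = 0 \<or> exp w \<noteq> 1}"
    using strip_subset_inv_expm1_reg_domain by (auto simp: K_iff)
  then have "compact ((deriv ^^ n) inv_expm1_reg ` K)"
    by (intro compact_continuous_image holomorphic_on_imp_continuous_on holomorphic_on_subset[OF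
          holomorphic_higher_deriv[OF holomorphic_inv_expm1_reg open_inv_expm1_reg_domain]])
       (auto simp: K_def)
  then obtain M where "M > 0" and M: "\<And>w. w \<in> K \<Longrightarrow> cmod ((deriv ^^ n) inv_expm1_reg w) \<le> M"
    by (auto dest!: compact_imp_bounded simp: bounded_pos)
  have "cmod ((deriv ^^ n) inv_expm1_reg w) \<le> M + 3 * fact n" if "\<bar>Im w\<bar> \<le> pi" for w
  proof (cases "\<bar>Re w\<bar> \<le> 2")
    case True
    then have "cmod ((deriv ^^ n) inv_expm1_reg w) \<le> M"
      using M that by (simp add: K_iff)
    then show ?thesis
      by (simp add: add_increasing2)
  next
    case False
    then show ?thesis
      using norm_higher_deriv_inv_expm1_reg_far[of w n] \<open>M > 0\<close> by simp
  qed
  moreover have "M + 3 * fact n > 0"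
    using \<open>M > 0\<close> by (simp add: add_pos_nonneg)
  ultimately show ?thesis
    by blast
qed

lemma even_higher_deriv_inv_expm1_reg_strip_le_norm:
  assumes "even n" "n \<noteq> 0"
  shows "\<exists>C>0. \<forall>w. \<bar>Im w\<bar> \<le> pi \<longrightarrow> cmod ((deriv ^^ n) inv_expm1_reg w) \<le> C * cmod w"
proof -
  define D where "D = {w::complex. w = 0 \<or> exp w \<noteq> 1}"
  define S where "S = {w. \<bar>Im w\<bar> \<le> pi}"
  have "open D" "0 \<in> D"
    using open_inv_expm1_reg_domain by (auto simp: D_def)
  have "S \<subseteq> D"
    using strip_subset_inv_expm1_reg_domain by (simp add: S_def D_def)
  have holo: "(deriv ^^ n) inv_expm1_reg holomorphic_on D"
    unfolding D_def by (intro holomorphic_higher_deriv holomorphic_inv_expm1_reg open_inv_expm1_reg_domain)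
  obtain C where "C > 0" and C: "\<And>w. w \<in> S \<Longrightarrow> cmod ((deriv ^^ Suc n) inv_expm1_reg w) \<le> C"
    using bounded_higher_deriv_inv_expm1_reg_strip[of "Suc n"] by (auto simp: S_def)
  have "(deriv ^^ n) inv_expm1_reg 0 = 0"
    using inv_expm1_reg_minus assms
    by (intro higher_deriv_zero_if_point_symmetric[OF holomorphic_inv_expm1_reg
          open_inv_expm1_reg_domain, where c = "-1"]) (auto simp: exp_minus)
  moreover have "cmod ((deriv ^^ n) inv_expm1_reg w - (deriv ^^ n) inv_expm1_reg 0) \<le> C * cmod (w - 0)"
    if "w \<in> S" for w
  proof (rule field_differentiable_bound[where S = S])
    show "convex S"
      using convex_halfspace_abs_le[of \<i> pi] by (simp add: S_def)
    show "((deriv ^^ n) inv_expm1_reg has_field_derivative (deriv ^^ Suc n) inv_expm1_reg z)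
            (at z within S)" if "z \<in> S" for z
      using holomorphic_derivI[OF holo \<open>open D\<close>] that \<open>S \<subseteq> D\<close>
      by (auto intro: has_field_derivative_at_within)
  qed (use C that in \<open>auto simp: S_def\<close>)
  ultimately show ?thesis
    using \<open>C > 0\<close> by (auto simp: S_def)
qed

lemma zero_notin_Gamma_contour: "\<kappa> > 0 \<Longrightarrow> 0 \<notin> Gamma_contour \<theta> \<kappa>"
  by (auto simp: Gamma_contour_def)

lemma norm_gamma_int_scaled_sub_inverse_power_le:
  assumes "\<tau> > 0" "z \<noteq> 0" "\<bar>Im z\<bar> \<le> pi / \<tau>"
    and bound: "\<And>w. \<bar>Im w\<bar> \<le> pi \<Longrightarrow> cmod ((deriv ^^ l) inv_expm1_reg w) \<le> B w"
  shows "cmod (gamma_int l (exp (- z * complex_of_real \<tau>)) / fact l * complex_of_real \<tau> ^ (l + 1)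
               - 1 / z ^ (l + 1))
         \<le> \<tau> ^ (l + 1) * B (z * complex_of_real \<tau>) / fact l"
proof -
  define w where "w = z * complex_of_real \<tau>"
  have "\<bar>Im w\<bar> \<le> pi"
    using assms(1,3) by (simp add: w_def abs_mult field_simps)
  moreover have "w \<noteq> 0"
    using assms(1,2) by (simp add: w_def)
  ultimately have "exp w \<noteq> 1"
    using strip_subset_inv_expm1_reg_domain by auto
  have "gamma_int l (exp (- z * complex_of_real \<tau>)) / fact l * complex_of_real \<tau> ^ (l + 1)
          - 1 / z ^ (l + 1)
        = complex_of_real \<tau> ^ (l + 1) * (gamma_int l (exp (-w)) / fact l - 1 / w ^ (l + 1))"
    using assms(1,2) by (simp add: w_def power_mult_distrib field_simps)
  also have "\<dots> = complex_of_real \<tau> ^ (l + 1) * ((-1) ^ l * (deriv ^^ l) inv_expm1_reg w / fact l)"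
    by (simp only: gamma_int_exp_minus_sub_inverse_power[OF \<open>exp w \<noteq> 1\<close>])
  finally show ?thesis
    using bound[OF \<open>\<bar>Im w\<bar> \<le> pi\<close>] assms(1)
    by (simp add: norm_mult norm_divide norm_power w_def divide_right_mono mult_left_mono)
qed

lemma norm_gamma_int_error_le_on_Gamma_contour_tau:
  assumes "\<kappa> > 0" "\<tau> > 0" "z \<in> Gamma_contour_tau \<theta> \<kappa> \<tau>"
    and bound: "\<And>w. \<bar>Im w\<bar> \<le> pi \<Longrightarrow>
                  cmod ((deriv ^^ l) inv_expm1_reg w) \<le> (if l = 0 \<or> odd l then C else C * cmod w)"
  shows "cmod (gamma_int l (exp (- z * complex_of_real \<tau>)) / fact l * complex_of_real \<tau> ^ (l + 1)
               - 1 / z ^ (l + 1))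
         \<le> (if l = 0 \<or> odd l then C / fact l * \<tau> ^ (l + 1) else C / fact l * \<tau> ^ (l + 2) * cmod z)"
proof -
  have "z \<noteq> 0" "\<bar>Im z\<bar> \<le> pi / \<tau>"
    using assms(1,3) zero_notin_Gamma_contour by (auto simp: Gamma_contour_tau_def)
  note norm_gamma_int_scaled_sub_inverse_power_le[OF \<open>\<tau> > 0\<close> this bound]
  also have "\<tau> ^ (l + 1) * (if l = 0 \<or> odd l then C else C * cmod (z * complex_of_real \<tau>)) / fact l
             = (if l = 0 \<or> odd l then C / fact l * \<tau> ^ (l + 1) else C / fact l * \<tau> ^ (l + 2) * cmod z)"
    using \<open>\<tau> > 0\<close> by (simp add: norm_mult power_Suc mult_ac)
  finally show ?thesis .
qed

theorem lemma3p2: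
  fixes k :: nat
  assumes "1 \<le> k" and "k \<le> 6"
  shows "\<exists>\<theta>0. pi / 2 < \<theta>0 \<and> \<theta>0 \<le> pi \<and>
    (\<forall>\<theta> \<kappa>::real. pi / 2 < \<theta> \<and> \<theta> < \<theta>0 \<and> \<kappa> > 0 \<longrightarrow>
      (\<forall>l \<le> 2 * k. \<exists>c > 0. \<forall>\<tau> > 0. \<forall>z \<in> Gamma_contour_tau \<theta> \<kappa> \<tau>.
         cmod (gamma_int l (exp (- z * complex_of_real \<tau>)) / fact l * complex_of_real \<tau> ^ (l + 1)
               - 1 / z ^ (l + 1))
         \<le> (if l = 0 \<or> odd l then c * \<tau> ^ (l + 1) else c * \<tau> ^ (l + 2) * cmod z)))"
proof (rule exI[of _ pi], intro conjI allI impI)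
  (* The bound holds for every l and every theta < pi. *)
  show "pi / 2 < pi" "pi \<le> pi"
    by simp_all
  fix \<theta> \<kappa> :: real and l :: nat
  assume "pi / 2 < \<theta> \<and> \<theta> < pi \<and> \<kappa> > 0" and "l \<le> 2 * k"
  then have "\<kappa> > 0"
    by simp
  obtain C where "C > 0" and C: "\<And>w. \<bar>Im w\<bar> \<le> pi \<Longrightarrow>
      cmod ((deriv ^^ l) inv_expm1_reg w) \<le> (if l = 0 \<or> odd l then C else C * cmod w)"
    using bounded_higher_deriv_inv_expm1_reg_strip[of l] even_higher_deriv_inv_expm1_reg_strip_le_norm[of l]
    by (cases "l = 0 \<or> odd l") auto
  show "\<exists>c > 0. \<forall>\<tau> > 0. \<forall>z \<in> Gamma_contour_tau \<theta> \<kappa> \<tau>.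
         cmod (gamma_int l (exp (- z * complex_of_real \<tau>)) / fact l * complex_of_real \<tau> ^ (l + 1)
               - 1 / z ^ (l + 1))
         \<le> (if l = 0 \<or> odd l then c * \<tau> ^ (l + 1) else c * \<tau> ^ (l + 2) * cmod z)"
    using \<open>C > 0\<close> \<open>\<kappa> > 0\<close> C
    by (intro exI[of _ "C / fact l"] conjI allI impI ballI norm_gamma_int_error_le_on_Gamma_contour_tau) auto
qed

end
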